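(* Let $G=(V,E,w)$ be a weighted graph with graph distance $d_G$, let $\mathcal{U}\subseteq V$ be a patch with injective coordinate map $\phi\colon\mathcal{U}\to\mathbb{R}^q$, let $v_0\in\mathcal{U}$, $\gamma\ge 0$ and $C>0$, and let $f\colon V\to\mathbb{R}$ satisfy $f\in C^\gamma_G(C,v_0)$ (defined below). Let $\tau\subseteq\mathcal{U}$ be a cluster with $v_0\in\tau$, and let $\psi_{j,k}$ be a samplet associated with $\tau$, i.e. $\psi_{j,k}=\sum_{\ell=1}^{|\tau|}\omega_{j,k}^{(\ell)}\delta_{\phi(v_\ell)}$, where $\tau=\{v_1,\dots,v_{|\tau|}\}$, with real weights satisfying $\sum_{\ell=1}^{|\tau|}(\omega_{j,k}^{(\ell)})^2=1$ and having vanishing moments up to order $\lfloor\gamma\rfloor$, i.e. $\sum_{\ell=1}^{|\tau|}\omega_{j,k}^{(\ell)}\,\phi(v_\ell)^{\boldsymbol\alpha}=0$ for every multi-index $\boldsymbol\alpha\in\mathbb{N}_0^q$ with $|\boldsymbol\alpha|\le\lfloor\gamma\rfloor$. Then \[ |\langle \psi_{j,k},f\circ\phi^{-1}\rangle|\le C \max_{v\in\mathcal{U}} d_G(v,v_0)^\gamma \sqrt{|\tau|}, \] where $\langle \psi_{j,k},g\rangle:=\sum_{\ell=1}^{|\tau|}\omega_{j,k}^{(\ell)}g(\phi(v_\ell))$.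
   Context: $G=(V,E,w)$ is a weighted graph with finite vertex set $V$, edge set $E$ and nonnegative edge weights $w$; $d_G$ denotes the graph (shortest weighted path) distance. The vertex set is partitioned into patches, each patch $\mathcal{U}$ being equipped with a unique chart, i.e. an injective coordinate map $\phi\colon\mathcal{U}\to\mathbb{R}^q$. For $\mathbf{x}\in\mathbb{R}^q$ and a multi-index $\boldsymbol\beta$, $\mathbf{x}^{\boldsymbol\beta}=\prod_i x_i^{\beta_i}$. Definition of the class: for $v_0\in\mathcal{U}$ (with $(\mathcal{U},\phi)$ the chart containing $v_0$), $\gamma\ge0$, $C>0$, a function $f\colon V\to\mathbb{R}$ belongs to $C^\gamma_G(C,v_0)$ if there exist real coefficients $(c_{\boldsymbol\beta})_{|\boldsymbol\beta|\le\lfloor\gamma\rfloor}$ with $\sum_{|\boldsymbol\beta|=\lfloor\gamma\rfloor}|c_{\boldsymbol\beta}|\neq 0$ such that \[ \Big|f(v)-\sum_{|\boldsymbol\beta|\le\lfloor\gamma\rfloor}c_{\boldsymbol\beta}\big(\phi(v)-\phi(v_0)\big)^{\boldsymbol\beta}\Big|\le C\, d_G(v,v_0)^\gamma\quad\text{for every } v\in\mathcal{U}. \] A cluster is a subset of the patch $\mathcal{U}$ (a node of a hierarchical cluster tree on $\phi(\mathcal{U})$); $\delta_{\mathbf{z}}$ denotes the Dirac measure at $\mathbf{z}\in\mathbb{R}^q$. *)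

theory Defs
  imports "HOL-Analysis.Analysis"
begin

definition weighted_graph :: "'v set \<Rightarrow> 'v set set \<Rightarrow> ('v set \<Rightarrow> real) \<Rightarrow> bool" where
  "weighted_graph V E w \<longleftrightarrow> finite V \<and> (\<forall>e\<in>E. \<exists>a b. a \<in> V \<and> b \<in> V \<and> a \<noteq> b \<and> e = {a, b})
     \<and> (\<forall>e\<in>E. 0 \<le> w e)"

fun is_walk :: "'v set set \<Rightarrow> 'v list \<Rightarrow> bool" where
  "is_walk E [] = False"
| "is_walk E [x] = True"
| "is_walk E (x # y # xs) = ({x, y} \<in> E \<and> is_walk E (y # xs))"

fun walk_weight :: "('v set \<Rightarrow> real) \<Rightarrow> 'v list \<Rightarrow> real" where
  "walk_weight w (x # y # xs) = w {x, y} + walk_weight w (y # xs)"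
| "walk_weight w _ = 0"

definition graph_connected :: "'v set \<Rightarrow> 'v set set \<Rightarrow> bool" where
  "graph_connected V E \<longleftrightarrow> (\<forall>u\<in>V. \<forall>v\<in>V. \<exists>xs. is_walk E xs \<and> hd xs = u \<and> last xs = v)"

definition graph_dist :: "'v set set \<Rightarrow> ('v set \<Rightarrow> real) \<Rightarrow> 'v \<Rightarrow> 'v \<Rightarrow> real" where
  "graph_dist E w u v = Inf {walk_weight w xs | xs. is_walk E xs \<and> hd xs = u \<and> last xs = v}"

text \<open>Real power with the convention 0^0 = 1 (Isabelle's powr has 0 powr 0 = 0).\<close>
definition rpow :: "real \<Rightarrow> real \<Rightarrow> real" where
  "rpow x g = (if x = 0 then (if g = 0 then 1 else 0) else x powr g)"

definition mi_order :: "('q::finite \<Rightarrow> nat) \<Rightarrow> nat" where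
  "mi_order \<beta> = (\<Sum>i\<in>UNIV. \<beta> i)"

definition monom_pow :: "real^'q::finite \<Rightarrow> ('q \<Rightarrow> nat) \<Rightarrow> real" where
  "monom_pow x \<beta> = (\<Prod>i\<in>UNIV. (x $ i) ^ (\<beta> i))"

definition holder_class ::
  "'v set set \<Rightarrow> ('v set \<Rightarrow> real) \<Rightarrow> 'v set \<Rightarrow> ('v \<Rightarrow> real^'q::finite) \<Rightarrow> 'v \<Rightarrow> real \<Rightarrow> real \<Rightarrow> ('v \<Rightarrow> real) \<Rightarrow> bool" where
  "holder_class E w U \<phi> v0 \<gamma> C f \<longleftrightarrow>
     (\<exists>c :: ('q \<Rightarrow> nat) \<Rightarrow> real.
        (\<Sum>\<beta>\<in>{\<beta>. mi_order \<beta> = nat \<lfloor>\<gamma>\<rfloor>}. \<bar>c \<beta>\<bar>) \<noteq> 0 \<and>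
        (\<forall>v\<in>U. \<bar>f v - (\<Sum>\<beta>\<in>{\<beta>. mi_order \<beta> \<le> nat \<lfloor>\<gamma>\<rfloor>}. c \<beta> * monom_pow (\<phi> v - \<phi> v0) \<beta>)\<bar>
                 \<le> C * rpow (graph_dist E w v v0) \<gamma>))"

end

theory Submission
  imports Defs
begin

text \<open>The moment conditions are stated for the monomials centred at the origin; by the
  binomial theorem each monomial centred at \<open>\<phi> v0\<close> is a combination of lower ones, so
  the samplet annihilates the polynomial approximating \<open>f\<close> at \<open>v0\<close>. The samplet
  coefficient therefore only sees the remainder, which is bounded pointwise by
  \<open>C max d(v, v0)^\<gamma>\<close>, and Cauchy-Schwarz with \<open>\<parallel>\<omega>\<parallel>\<^sub>2 = 1\<close> contributes
  the factor \<open>sqrt |\<tau>|\<close>.\<close>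

lemma monom_pow_diff_binomial:
  fixes x y :: "real^'q::finite"
  shows "monom_pow (x - y) \<beta> = (\<Sum>g\<in>PiE UNIV (\<lambda>i. {..\<beta> i}).
      (\<Prod>i\<in>UNIV. of_nat (\<beta> i choose g i) * (- y $ i) ^ (\<beta> i - g i)) * monom_pow x g)"
proof -
  have "monom_pow (x - y) \<beta> =
      (\<Prod>i\<in>UNIV. \<Sum>k\<le>\<beta> i. of_nat (\<beta> i choose k) * (x $ i) ^ k * (- y $ i) ^ (\<beta> i - k))"
    unfolding monom_pow_def
  proof (rule prod.cong)
    fix i
    have "(x - y) $ i = x $ i + (- y $ i)" by simp
    then show "((x - y) $ i) ^ \<beta> i =
        (\<Sum>k\<le>\<beta> i. of_nat (\<beta> i choose k) * (x $ i) ^ k * (- y $ i) ^ (\<beta> i - k))"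
      by (simp only: binomial_ring)
  qed simp
  also have "\<dots> = (\<Sum>g\<in>PiE UNIV (\<lambda>i. {..\<beta> i}).
      \<Prod>i\<in>UNIV. of_nat (\<beta> i choose g i) * (x $ i) ^ g i * (- y $ i) ^ (\<beta> i - g i))"
    by (rule prod_sum_PiE) auto
  also have "\<dots> = (\<Sum>g\<in>PiE UNIV (\<lambda>i. {..\<beta> i}).
      (\<Prod>i\<in>UNIV. of_nat (\<beta> i choose g i) * (- y $ i) ^ (\<beta> i - g i)) * monom_pow x g)"
    unfolding monom_pow_def
    by (rule sum.cong) (simp_all add: prod.distrib[symmetric] mult_ac)
  finally show ?thesis .
qed

lemma mi_order_le_PiE:
  fixes \<beta> :: "'q::finite \<Rightarrow> nat"
  assumes "g \<in> PiE UNIV (\<lambda>i. {..\<beta> i})"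
  shows "mi_order g \<le> mi_order \<beta>"
  unfolding mi_order_def using assms by (intro sum_mono) auto

lemma vanishing_moments_shift:
  fixes x :: "'v \<Rightarrow> real^'q::finite"
  assumes moments: "\<And>\<alpha>. mi_order \<alpha> \<le> n \<Longrightarrow> (\<Sum>v\<in>A. \<omega> v * monom_pow (x v) \<alpha>) = 0"
    and "mi_order \<beta> \<le> n"
  shows "(\<Sum>v\<in>A. \<omega> v * monom_pow (x v - z) \<beta>) = 0"
proof -
  define K where "K g = (\<Prod>i\<in>UNIV. of_nat (\<beta> i choose g i) * (- z $ i) ^ (\<beta> i - g i))"
    for g :: "'q \<Rightarrow> nat"
  have "(\<Sum>v\<in>A. \<omega> v * monom_pow (x v - z) \<beta>) =
      (\<Sum>v\<in>A. \<Sum>g\<in>PiE UNIV (\<lambda>i. {..\<beta> i}). K g * (\<omega> v * monom_pow (x v) g))"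
    by (simp add: monom_pow_diff_binomial K_def sum_distrib_left mult_ac)
  also have "\<dots> = (\<Sum>g\<in>PiE UNIV (\<lambda>i. {..\<beta> i}). K g * (\<Sum>v\<in>A. \<omega> v * monom_pow (x v) g))"
    by (simp add: sum.swap[of _ A] sum_distrib_left)
  also have "\<dots> = 0"
  proof (rule sum.neutral, rule ballI)
    fix g assume "g \<in> PiE UNIV (\<lambda>i. {..\<beta> i})"
    then have "mi_order g \<le> n"
      using mi_order_le_PiE \<open>mi_order \<beta> \<le> n\<close> by (blast intro: le_trans)
    then show "K g * (\<Sum>v\<in>A. \<omega> v * monom_pow (x v) g) = 0"
      by (simp add: moments)
  qed
  finally show ?thesis .
qed

lemma vanishing_moments_polynomial:
  fixes x :: "'v \<Rightarrow> real^'q::finite"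
  assumes "\<And>\<alpha>. mi_order \<alpha> \<le> n \<Longrightarrow> (\<Sum>v\<in>A. \<omega> v * monom_pow (x v) \<alpha>) = 0"
  shows "(\<Sum>v\<in>A. \<omega> v * (\<Sum>\<beta>\<in>{\<beta>. mi_order \<beta> \<le> n}. c \<beta> * monom_pow (x v - z) \<beta>)) = 0"
proof -
  have "(\<Sum>v\<in>A. \<omega> v * (\<Sum>\<beta>\<in>{\<beta>. mi_order \<beta> \<le> n}. c \<beta> * monom_pow (x v - z) \<beta>)) =
      (\<Sum>\<beta>\<in>{\<beta>. mi_order \<beta> \<le> n}. c \<beta> * (\<Sum>v\<in>A. \<omega> v * monom_pow (x v - z) \<beta>))"
    by (simp add: sum_distrib_left sum.swap[of _ A] mult_ac)
  also have "\<dots> = 0"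
    using vanishing_moments_shift[OF assms] by simp
  finally show ?thesis .
qed

lemma abs_sum_mult_le_L2_set_sqrt_card:
  fixes \<omega> g :: "'a \<Rightarrow> real"
  assumes bound: "\<And>v. v \<in> A \<Longrightarrow> \<bar>g v\<bar> \<le> B"
  shows "\<bar>\<Sum>v\<in>A. \<omega> v * g v\<bar> \<le> B * L2_set \<omega> A * sqrt (real (card A))"
proof (cases "A = {}")
  case False
  then obtain a where "a \<in> A" by blast
  then have "0 \<le> B" using bound[of a] by linarith
  have "\<bar>\<Sum>v\<in>A. \<omega> v * g v\<bar> \<le> (\<Sum>v\<in>A. \<bar>\<omega> v\<bar> * B)"
    using bound by (intro order_trans[OF sum_abs] sum_mono) (simp add: abs_mult mult_left_mono)
  also have "\<dots> = B * (\<Sum>v\<in>A. \<bar>\<omega> v\<bar> * \<bar>1\<bar>)"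
    by (simp add: sum_distrib_left mult_ac)
  also have "\<dots> \<le> B * (L2_set \<omega> A * L2_set (\<lambda>_. 1) A)"
    using \<open>0 \<le> B\<close> by (intro mult_left_mono L2_set_mult_ineq)
  also have "\<dots> = B * L2_set \<omega> A * sqrt (real (card A))"
    by (simp add: L2_set_def)
  finally show ?thesis .
qed simp

theorem proposition4p1:
  fixes V :: "'v set" and E :: "'v set set" and w :: "'v set \<Rightarrow> real"
    and U \<tau> :: "'v set" and \<phi> :: "'v \<Rightarrow> real^'q::finite" and v0 :: 'v
    and \<gamma> C :: real and f :: "'v \<Rightarrow> real" and \<omega> :: "'v \<Rightarrow> real"
  assumes G: "weighted_graph V E w"
    and conn: "graph_connected V E"
    and U: "U \<subseteq> V" and inj: "inj_on \<phi> U"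
    and v0: "v0 \<in> U" and \<gamma>: "\<gamma> \<ge> 0" and C: "C > 0"
    and f: "holder_class E w U \<phi> v0 \<gamma> C f"
    and \<tau>: "\<tau> \<subseteq> U" and v0\<tau>: "v0 \<in> \<tau>"
    and norm: "(\<Sum>v\<in>\<tau>. (\<omega> v)\<^sup>2) = 1"
    and moments: "\<And>\<alpha>. mi_order \<alpha> \<le> nat \<lfloor>\<gamma>\<rfloor> \<Longrightarrow> (\<Sum>v\<in>\<tau>. \<omega> v * monom_pow (\<phi> v) \<alpha>) = 0"
  shows "\<bar>\<Sum>v\<in>\<tau>. \<omega> v * f (inv_into U \<phi> (\<phi> v))\<bar>
           \<le> C * (MAX v\<in>U. rpow (graph_dist E w v v0) \<gamma>) * sqrt (real (card \<tau>))"
proof -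
  define d where "d v = rpow (graph_dist E w v v0) \<gamma>" for v
  obtain c where c: "\<And>v. v \<in> U \<Longrightarrow>
      \<bar>f v - (\<Sum>\<beta>\<in>{\<beta>. mi_order \<beta> \<le> nat \<lfloor>\<gamma>\<rfloor>}. c \<beta> * monom_pow (\<phi> v - \<phi> v0) \<beta>)\<bar> \<le> C * d v"
    using f unfolding holder_class_def d_def by blast
  define P where "P v = (\<Sum>\<beta>\<in>{\<beta>. mi_order \<beta> \<le> nat \<lfloor>\<gamma>\<rfloor>}. c \<beta> * monom_pow (\<phi> v - \<phi> v0) \<beta>)" for v
  have "finite U" using G U unfolding weighted_graph_def by (auto intro: finite_subset)
  have remainder: "\<bar>f v - P v\<bar> \<le> C * (MAX v\<in>U. d v)" if "v \<in> \<tau>" for v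
  proof -
    have "\<bar>f v - P v\<bar> \<le> C * d v" using c \<tau> that unfolding P_def by blast
    also have "\<dots> \<le> C * (MAX v\<in>U. d v)"
      using \<open>finite U\<close> \<tau> that C by (intro mult_left_mono) auto
    finally show ?thesis .
  qed
  have "(\<Sum>v\<in>\<tau>. \<omega> v * f (inv_into U \<phi> (\<phi> v))) = (\<Sum>v\<in>\<tau>. \<omega> v * f v)"
    using inj \<tau> by (intro sum.cong) auto
  also have "\<dots> = (\<Sum>v\<in>\<tau>. \<omega> v * (f v - P v))"
    using vanishing_moments_polynomial[OF moments, where c = c and z = "\<phi> v0"]
    by (simp add: P_def right_diff_distrib sum_subtractf)
  also have "\<bar>\<dots>\<bar> \<le> C * (MAX v\<in>U. d v) * L2_set \<omega> \<tau> * sqrt (real (card \<tau>))"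
    using remainder by (rule abs_sum_mult_le_L2_set_sqrt_card)
  finally show ?thesis
    by (simp add: L2_set_def norm d_def)
qed

end
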